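(* Let $(\Omega,\mathcal F,P)$ be a probability space and $T:\Omega\to\Omega$ an invertible measurable transformation preserving $P$ such that $(\Omega,\mathcal F,P,T)$ is ergodic. Let $\mathcal S$ be a countable set and $(\psi_j)_{j\in\mathcal S}$ affine maps $\psi_j(y)=\beta_j+\rho_j y$ of $\mathbb R$ which are all strict contractions ($0<\rho_j<1$). Let $\epsilon:\Omega\to\mathcal S$ be measurable with $P(\epsilon=j)>0$ for all $j\in\mathcal S$, write $b(\omega)=\beta_{\epsilon(\omega)}$, $r(\omega)=\rho_{\epsilon(\omega)}$, and assume $b\in L^1(P)$, $\log r\in L^1(P)$. Let $r_0=1$, $r_n(\omega)=r(\omega)\cdots r(T^{n-1}\omega)$, $X(\omega)=\sum_{n\ge0}r_n(\omega)b(T^n\omega)$, and let $P_X$ be the law of $X$. For a multi-index $i=(i_0,\dots,i_{n-1})\in\mathcal S^n$, $n\ge1$, write $\psi_i=\psi_{i_0}\circ\cdots\circ\psi_{i_{n-1}}$ and $fix(\psi_i)$ for its unique fixed point. Call $i$ minimal if $P\big(\epsilon(\omega)=i_0,\epsilon(T\omega)=i_1,\dots,\epsilon(T^{n-1}\omega)=i_{n-1}\big)>0$ and for every strict prefix $j=(i_0,\dots,i_{m-1})$, $1\le m<n$, of $i$, $fix(\psi_j)\ne fix(\psi_i)$. Let $\mathcal M$ be the set of minimal multi-indices. Suppose the map $\mathcal M\to\mathbb R$, $i\mapsto fix(\psi_i)$, is injective. Then either $P_X$ is continuous, or there exist $N\ge1$ and $(i_0,\dots,i_{N-1})\in\mathcal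 S^N$ such that for $P$-a.e. $\omega$ the sequence $(\epsilon(T^n\omega))_{n\ge0}$ is a left shift of the periodic sequence $(i_0,\dots,i_{N-1},i_0,\dots,i_{N-1},\dots)\in\mathcal S^{\mathbb N}$; in the latter case, up to a $P$-null set, $X(\Omega)=\{\psi_{i_k}\circ\cdots\circ\psi_{i_{N-1}}(c):0\le k<N\}$, where $c=fix(\psi_{i_0}\circ\cdots\circ\psi_{i_{N-1}})$.
   Context: $P_X$ is continuous means it has no atoms. A left shift of a sequence $(u_n)_{n\ge0}$ is a sequence $(u_{n+k})_{n\ge0}$ for some $k\ge0$. *)

theory Defs
  imports "HOL-Probability.Probability"
begin

definition invertible_mpt :: "'a measure \<Rightarrow> ('a \<Rightarrow> 'a) \<Rightarrow> bool" where
  "invertible_mpt M T \<longleftrightarrow>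
     T \<in> measurable M M \<and> bij_betw T (space M) (space M) \<and>
     the_inv_into (space M) T \<in> measurable M M \<and> distr M M T = M"

definition ergodic :: "'a measure \<Rightarrow> ('a \<Rightarrow> 'a) \<Rightarrow> bool" where
  "ergodic M T \<longleftrightarrow>
     (\<forall>A\<in>sets M. T -` A \<inter> space M = A \<longrightarrow> measure M A = 0 \<or> measure M A = 1)"

fun psi_comp :: "('s \<Rightarrow> real) \<Rightarrow> ('s \<Rightarrow> real) \<Rightarrow> 's list \<Rightarrow> real \<Rightarrow> real" where
  "psi_comp beta rho [] = id"
| "psi_comp beta rho (j # js) = (\<lambda>y. beta j + rho j * y) \<circ> psi_comp beta rho js"

definition fixp :: "(real \<Rightarrow> real) \<Rightarrow> real" where
  "fixp f = (THE y. f y = y)"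

definition minimal_idx ::
  "'a measure \<Rightarrow> ('a \<Rightarrow> 'a) \<Rightarrow> ('a \<Rightarrow> 's) \<Rightarrow> 's set \<Rightarrow> ('s \<Rightarrow> real) \<Rightarrow> ('s \<Rightarrow> real) \<Rightarrow> 's list \<Rightarrow> bool" where
  "minimal_idx M T eps S beta rho i \<longleftrightarrow>
     length i \<ge> 1 \<and> set i \<subseteq> S \<and>
     measure M {\<omega> \<in> space M. \<forall>k < length i. eps ((T ^^ k) \<omega>) = i ! k} > 0 \<and>
     (\<forall>m. 1 \<le> m \<and> m < length i \<longrightarrow>
        fixp (psi_comp beta rho (take m i)) \<noteq> fixp (psi_comp beta rho i))"

definition periodic_coding ::
  "'a measure \<Rightarrow> ('a \<Rightarrow> 'a) \<Rightarrow> ('a \<Rightarrow> 's) \<Rightarrow> 's set \<Rightarrow> nat \<Rightarrow> 's list \<Rightarrow> bool" where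
  "periodic_coding M T eps S N is \<longleftrightarrow>
     N \<ge> 1 \<and> length is = N \<and> set is \<subseteq> S \<and>
     (AE \<omega> in M. \<exists>k. \<forall>n. eps ((T ^^ n) \<omega>) = is ! ((n + k) mod N))"

end

theory Submission
  imports Defs
begin

(* Birkhoff sums of an integrable function with negative mean are a.e. bounded above: the set
   where they are unbounded is invariant, hence null or full by ergodicity, and full is ruled out
   by the maximal ergodic inequality. Applied to ln r, |b| and indicator functions this gives
   exponential decay of r_n, at most linear growth of b o T^n and a.e. infinite recurrence to
   sets of positive measure; so X converges a.e. and X = psi_w (X o T^n) for the code word w of
   length n. If P(X = x) > 0, a.e. orbit returns to {X = x} infinitely often. A return after n
   steps makes x the fixed point of psi of the n-letter code word, hence of its shortest such
   prefix, which is a minimal multi-index; by injectivity that prefix is always the same word u.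
   So the coding is u-periodic from the first visit on, and the forward invariant set of
   u-periodic codings, being reached a.e., has full measure. On a periodic coding X is the fixed
   point of psi of a rotation of u, which is psi_(i_k) o ... o psi_(i_(N-1)) (c). *)

lemma funpow_apply_add: "(f ^^ m) ((f ^^ n) x) = (f ^^ (m + n)) x"
  by (simp add: funpow_add)

locale mpt = prob_space M for M :: "'a measure" +
  fixes T :: "'a \<Rightarrow> 'a"
  assumes T_measurable: "T \<in> M \<rightarrow>\<^sub>M M"
    and T_preserving: "distr M M T = M"
begin

lemma funpow_measurable[measurable]: "T ^^ n \<in> M \<rightarrow>\<^sub>M M"
  by (induction n) (auto intro: measurable_compose[OF _ T_measurable])

lemma funpow_in_space: "\<omega> \<in> space M \<Longrightarrow> (T ^^ n) \<omega> \<in> space M"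
  using measurable_space[OF funpow_measurable] by blast

lemma distr_funpow: "distr M M (T ^^ n) = M"
proof (induction n)
  case (Suc n)
  have "distr M M (T ^^ Suc n) = distr (distr M M T) M (T ^^ n)"
    by (simp only: funpow_Suc_right distr_distr[OF funpow_measurable T_measurable])
  then show ?case
    using Suc T_preserving by (simp del: funpow.simps)
qed simp

lemma measure_funpow_vimage:
  "A \<in> sets M \<Longrightarrow> measure M ((T ^^ n) -` A \<inter> space M) = measure M A"
  using measure_distr[OF funpow_measurable, of A n] distr_funpow[of n] by simp

lemma null_sets_funpow_vimage:
  "A \<in> null_sets M \<Longrightarrow> (T ^^ n) -` A \<inter> space M \<in> null_sets M"
  using measure_funpow_vimage[of A n] measurable_sets[OF funpow_measurable, of A n]
  by (auto simp: null_sets_def emeasure_eq_measure)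

lemma
  fixes f :: "'a \<Rightarrow> real"
  assumes "integrable M f"
  shows integrable_funpow: "integrable M (\<lambda>\<omega>. f ((T ^^ n) \<omega>))"
    and integral_funpow: "(\<integral>\<omega>. f ((T ^^ n) \<omega>) \<partial>M) = integral\<^sup>L M f"
proof -
  have [measurable]: "f \<in> borel_measurable M"
    using assms by auto
  show "integrable M (\<lambda>\<omega>. f ((T ^^ n) \<omega>))"
    using assms integrable_distr_eq[OF funpow_measurable, of f] distr_funpow by simp
  show "(\<integral>\<omega>. f ((T ^^ n) \<omega>) \<partial>M) = integral\<^sup>L M f"
    using integral_distr[OF funpow_measurable, of f] distr_funpow by simp
qed

lemma AE_funpow: "AE \<omega> in M. P \<omega> \<Longrightarrow> AE \<omega> in M. P ((T ^^ n) \<omega>)"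
  by (metis AE_distrD distr_funpow funpow_measurable)

lemma AE_all_funpow: "AE \<omega> in M. P \<omega> \<Longrightarrow> AE \<omega> in M. \<forall>n. P ((T ^^ n) \<omega>)"
  by (simp add: AE_all_countable AE_funpow)

lemma AE_invariant_null_set:
  assumes "AE \<omega> in M. P \<omega>"
  obtains Z where "Z \<in> null_sets M" "\<And>\<omega>. \<omega> \<in> space M - Z \<Longrightarrow> P \<omega> \<and> T \<omega> \<in> space M - Z"
proof -
  obtain N where N: "{\<omega> \<in> space M. \<not> P \<omega>} \<subseteq> N" "N \<in> null_sets M"
    using assms by (force elim: AE_E simp: null_sets_def)
  define Z where "Z = (\<Union>n. (T ^^ n) -` N \<inter> space M)"
  have "Z \<in> null_sets M"
    unfolding Z_def using N(2) by (intro null_sets_UN null_sets_funpow_vimage)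
  moreover have "P \<omega> \<and> T \<omega> \<in> space M - Z" if "\<omega> \<in> space M - Z" for \<omega>
  proof -
    have orbit: "(T ^^ n) \<omega> \<notin> N" for n
      using that unfolding Z_def by blast
    have "(T ^^ n) (T \<omega>) \<notin> N" for n
      using orbit[of "Suc n"] by (simp add: funpow_Suc_right del: funpow.simps)
    then show ?thesis
      using that orbit[of 0] N(1) measurable_space[OF T_measurable] unfolding Z_def by auto
  qed
  ultimately show thesis
    using that by blast
qed

lemma AE_in_if_AE_eventually_in:
  assumes A[measurable]: "A \<in> sets M" and forward: "\<And>\<omega>. \<omega> \<in> A \<Longrightarrow> T \<omega> \<in> A"
    and eventually: "AE \<omega> in M. \<exists>m. (T ^^ m) \<omega> \<in> A"
  shows "AE \<omega> in M. \<omega> \<in> A"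
proof -
  define B where "B m = (T ^^ m) -` A \<inter> space M" for m
  have B_sets: "range B \<subseteq> sets M"
    unfolding B_def by auto
  have "incseq B"
    using forward by (intro incseq_SucI) (auto simp: B_def)
  then have "(\<lambda>m. measure M (B m)) \<longlonglongrightarrow> measure M (\<Union>m. B m)"
    using B_sets by (rule finite_Lim_measure_incseq[rotated])
  moreover have "measure M (B m) = measure M A" for m
    unfolding B_def by (rule measure_funpow_vimage[OF A])
  ultimately have "measure M A = measure M (\<Union>m. B m)"
    by (simp add: LIMSEQ_const_iff)
  also have "\<dots> = 1"
    using eventually B_sets by (subst prob_eq_1) (auto simp: B_def elim!: AE_mp intro!: AE_I2)
  finally show ?thesis
    by (rule AE_prob_1)
qed

definition birkhoff_sum :: "('a \<Rightarrow> real) \<Rightarrow> nat \<Rightarrow> 'a \<Rightarrow> real" where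
  "birkhoff_sum f n \<omega> = (\<Sum>k<n. f ((T ^^ k) \<omega>))"

lemma birkhoff_sum_0[simp]: "birkhoff_sum f 0 \<omega> = 0"
  by (simp add: birkhoff_sum_def)

lemma birkhoff_sum_Suc: "birkhoff_sum f (Suc n) \<omega> = f \<omega> + birkhoff_sum f n (T \<omega>)"
  unfolding birkhoff_sum_def
  by (subst sum.lessThan_Suc_shift) (simp add: funpow_Suc_right del: funpow.simps)

lemma birkhoff_sum_measurable[measurable]:
  assumes [measurable]: "f \<in> borel_measurable M"
  shows "birkhoff_sum f n \<in> borel_measurable M"
  unfolding birkhoff_sum_def[abs_def] by measurable

lemma integrable_birkhoff_sum: "integrable M f \<Longrightarrow> integrable M (birkhoff_sum f n)"
  unfolding birkhoff_sum_def[abs_def] using integrable_funpow by simp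

fun birkhoff_max :: "('a \<Rightarrow> real) \<Rightarrow> nat \<Rightarrow> 'a \<Rightarrow> real" where
  "birkhoff_max f 0 \<omega> = 0"
| "birkhoff_max f (Suc n) \<omega> = max (birkhoff_max f n \<omega>) (birkhoff_sum f (Suc n) \<omega>)"

lemma birkhoff_max_nonneg: "0 \<le> birkhoff_max f n \<omega>"
  by (induction n) auto

lemma birkhoff_sum_le_max: "k \<le> n \<Longrightarrow> birkhoff_sum f k \<omega> \<le> birkhoff_max f n \<omega>"
  by (induction n) (auto simp: le_Suc_eq)

lemma birkhoff_max_attained:
  "0 < birkhoff_max f n \<omega> \<Longrightarrow> \<exists>k. 1 \<le> k \<and> k \<le> n \<and> birkhoff_max f n \<omega> = birkhoff_sum f k \<omega>"
  by (induction n) (auto simp: max_def le_Suc_eq split: if_splits)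

lemma birkhoff_max_le_step:
  assumes "0 < birkhoff_max f n \<omega>"
  shows "birkhoff_max f n \<omega> \<le> f \<omega> + birkhoff_max f n (T \<omega>)"
proof -
  obtain k where k: "1 \<le> k" "k \<le> n" "birkhoff_max f n \<omega> = birkhoff_sum f (Suc (k - 1)) \<omega>"
    using birkhoff_max_attained[OF assms] by auto
  have "birkhoff_sum f (k - 1) (T \<omega>) \<le> birkhoff_max f n (T \<omega>)"
    using k by (intro birkhoff_sum_le_max) auto
  then show ?thesis
    using k(3) birkhoff_sum_Suc by simp
qed

lemma integrable_birkhoff_max: "integrable M f \<Longrightarrow> integrable M (birkhoff_max f n)"
proof (induction n)
  case 0
  have "birkhoff_max f 0 = (\<lambda>_. 0)"
    by auto
  then show ?case
    by simp
next
  case (Suc n)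
  then show ?case
    using integrable_birkhoff_sum by (simp add: integrable_max)
qed

theorem maximal_ergodic_inequality:
  assumes f: "integrable M f"
  shows "0 \<le> (\<integral>\<omega>. indicator {\<omega> \<in> space M. 0 < birkhoff_max f n \<omega>} \<omega> * f \<omega> \<partial>M)"
proof -
  let ?F = "birkhoff_max f n"
  let ?A = "{\<omega> \<in> space M. 0 < ?F \<omega>}"
  have F: "integrable M ?F"
    using integrable_birkhoff_max[OF f] .
  then have [measurable]: "?F \<in> borel_measurable M"
    by auto
  have FT: "integrable M (\<lambda>\<omega>. ?F (T \<omega>))"
    using integrable_funpow[OF F, of 1] by simp
  have "0 = (\<integral>\<omega>. ?F \<omega> - ?F (T \<omega>) \<partial>M)"
    using integral_funpow[OF F, of 1] F FT by simp
  also have "\<dots> \<le> (\<integral>\<omega>. indicator ?A \<omega> * f \<omega> \<partial>M)"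
  proof (rule integral_mono)
    show "integrable M (\<lambda>\<omega>. indicator ?A \<omega> * f \<omega>)"
      using integrable_mult_indicator[of ?A M f] f by simp
    show "?F \<omega> - ?F (T \<omega>) \<le> indicator ?A \<omega> * f \<omega>" if "\<omega> \<in> space M" for \<omega>
      using that birkhoff_max_le_step[of f n \<omega>] birkhoff_max_nonneg[of f n "T \<omega>"]
      by (cases "0 < ?F \<omega>") auto
  qed (use F FT in simp)
  finally show ?thesis .
qed

lemma integral_nonneg_if_AE_birkhoff_sum_pos:
  assumes f: "integrable M f"
    and pos: "AE \<omega> in M. \<exists>n. 0 < birkhoff_sum f n \<omega>"
  shows "0 \<le> integral\<^sup>L M f"
proof -
  have [measurable]: "f \<in> borel_measurable M" "\<And>n. birkhoff_max f n \<in> borel_measurable M"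
    using f integrable_birkhoff_max[OF f] by auto
  define g where "g n \<omega> = indicator {\<omega> \<in> space M. 0 < birkhoff_max f n \<omega>} \<omega> * f \<omega>" for n \<omega>
  have "(\<lambda>n. integral\<^sup>L M (g n)) \<longlonglongrightarrow> integral\<^sup>L M f"
  proof (rule integral_dominated_convergence[where w="\<lambda>\<omega>. norm (f \<omega>)"])
    show "AE \<omega> in M. (\<lambda>n. g n \<omega>) \<longlonglongrightarrow> f \<omega>"
      using pos AE_space
    proof eventually_elim
      case (elim \<omega>)
      then obtain n0 where "0 < birkhoff_sum f n0 \<omega>"
        by blast
      then have "0 < birkhoff_max f n \<omega>" if "n0 \<le> n" for n
        using birkhoff_sum_le_max[OF that, of f \<omega>] by linarith
      then have "\<forall>n\<ge>n0. g n \<omega> = f \<omega>"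
        using elim by (simp add: g_def)
      then show ?case
        by (intro tendsto_eventually) (auto simp: eventually_sequentially)
    qed
    show "g n \<in> borel_measurable M" for n
      unfolding g_def by measurable
  qed (use f in \<open>auto simp: g_def indicator_def\<close>)
  moreover have "0 \<le> integral\<^sup>L M (g n)" for n
    unfolding g_def using maximal_ergodic_inequality[OF f] .
  ultimately show ?thesis
    by (meson LIMSEQ_le_const)
qed

lemma birkhoff_sum_bounded_shift_iff:
  "(\<exists>C. \<forall>n. birkhoff_sum f n (T \<omega>) \<le> C) \<longleftrightarrow> (\<exists>C. \<forall>n. birkhoff_sum f n \<omega> \<le> C)"
proof
  assume "\<exists>C. \<forall>n. birkhoff_sum f n (T \<omega>) \<le> C"
  then obtain C where "\<And>n. birkhoff_sum f n (T \<omega>) \<le> C"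
    by blast
  then have "birkhoff_sum f n \<omega> \<le> max 0 (f \<omega> + C)" for n
    by (cases n) (auto simp: birkhoff_sum_Suc intro: max.coboundedI2)
  then show "\<exists>C. \<forall>n. birkhoff_sum f n \<omega> \<le> C"
    by blast
next
  assume "\<exists>C. \<forall>n. birkhoff_sum f n \<omega> \<le> C"
  then obtain C where C: "\<And>n. birkhoff_sum f n \<omega> \<le> C"
    by blast
  have "birkhoff_sum f n (T \<omega>) \<le> C - f \<omega>" for n
    using C[of "Suc n"] birkhoff_sum_Suc[of f n \<omega>] by simp
  then show "\<exists>C. \<forall>n. birkhoff_sum f n (T \<omega>) \<le> C"
    by blast
qed

end

locale ergodic_mpt = mpt +
  assumes T_ergodic: "ergodic M T"
begin

theorem AE_birkhoff_sum_bounded: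
  assumes f: "integrable M f" and neg: "integral\<^sup>L M f < 0"
  shows "AE \<omega> in M. \<exists>C. \<forall>n. birkhoff_sum f n \<omega> \<le> C"
proof -
  have [measurable]: "f \<in> borel_measurable M"
    using f by auto
  define D where "D = {\<omega> \<in> space M. \<not> (\<exists>C. \<forall>n. birkhoff_sum f n \<omega> \<le> C)}"
  have "D = {\<omega> \<in> space M. \<forall>C::nat. \<exists>n. real C < birkhoff_sum f n \<omega>}"
    unfolding D_def by (auto simp: not_le) (meson le_less_trans less_le_not_le real_arch_simple)
  then have D_sets[measurable]: "D \<in> sets M"
    by simp
  have "T -` D \<inter> space M = D"
    using measurable_space[OF T_measurable] birkhoff_sum_bounded_shift_iff[of f]
    unfolding D_def by blast
  moreover have "measure M D \<noteq> 1"
  proof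
    assume "measure M D = 1"
    then have "AE \<omega> in M. \<exists>n. 0 < birkhoff_sum f n \<omega>"
      by (rule AE_prob_1[THEN AE_mp]) (auto simp: D_def not_le intro!: AE_I2)
    then show False
      using integral_nonneg_if_AE_birkhoff_sum_pos[OF f] neg by simp
  qed
  ultimately have "measure M D = 0"
    using T_ergodic D_sets unfolding ergodic_def by blast
  then show ?thesis
    using D_sets by (intro AE_I'[of D]) (auto simp: D_def null_sets_def emeasure_eq_measure)
qed

corollary AE_birkhoff_sum_le_linear:
  assumes f: "integrable M f" and c: "integral\<^sup>L M f < c"
  shows "AE \<omega> in M. \<exists>C. \<forall>n. birkhoff_sum f n \<omega> \<le> C + real n * c"
proof -
  have "integrable M (\<lambda>\<omega>. f \<omega> - c)" "integral\<^sup>L M (\<lambda>\<omega>. f \<omega> - c) < 0"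
    using f c by (simp_all add: prob_space)
  then have "AE \<omega> in M. \<exists>C. \<forall>n. birkhoff_sum (\<lambda>\<omega>. f \<omega> - c) n \<omega> \<le> C"
    by (rule AE_birkhoff_sum_bounded)
  moreover have "birkhoff_sum (\<lambda>\<omega>. f \<omega> - c) n \<omega> = birkhoff_sum f n \<omega> - real n * c" for n \<omega>
    by (simp add: birkhoff_sum_def sum_subtractf)
  ultimately show ?thesis
    by (auto elim!: AE_mp intro!: AE_I2 simp: algebra_simps)
qed

theorem AE_infinitely_often_in:
  assumes A: "A \<in> sets M" and pos: "0 < measure M A"
  shows "AE \<omega> in M. \<forall>m. \<exists>n\<ge>m. (T ^^ n) \<omega> \<in> A"
proof -
  let ?p = "measure M A"
  (* For f = -1_A the linear bound says that the orbit visits A at least n p/2 - C times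
     before time n. *)
  have "integral\<^sup>L M (\<lambda>\<omega>. - indicator A \<omega>) < - ?p / 2"
    using A pos by simp
  then have "AE \<omega> in M. \<exists>C. \<forall>n. birkhoff_sum (\<lambda>\<omega>. - indicator A \<omega>) n \<omega> \<le> C + real n * (- ?p / 2)"
    using A by (intro AE_birkhoff_sum_le_linear) (auto simp: emeasure_eq_measure)
  then show ?thesis
  proof (rule AE_mp, intro AE_I2 impI allI)
    fix \<omega> m
    assume "\<exists>C. \<forall>n. birkhoff_sum (\<lambda>\<omega>. - indicator A \<omega>) n \<omega> \<le> C + real n * (- ?p / 2)"
    then obtain C where C: "\<And>n. - (\<Sum>k<n. indicator A ((T ^^ k) \<omega>)) \<le> C + real n * (- ?p / 2)"
      by (auto simp: birkhoff_sum_def sum_negf)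
    show "\<exists>n\<ge>m. (T ^^ n) \<omega> \<in> A"
    proof (rule ccontr)
      assume no_visit: "\<not> (\<exists>n\<ge>m. (T ^^ n) \<omega> \<in> A)"
      have visits: "(\<Sum>k<n. indicator A ((T ^^ k) \<omega>)) \<le> real m" for n
      proof -
        have "(\<Sum>k<n. indicator A ((T ^^ k) \<omega>)) \<le> (\<Sum>k<n. of_bool (k < m) :: real)"
          using no_visit by (intro sum_mono) (auto simp: not_less split: split_indicator)
        also have "\<dots> = real (card ({..<n} \<inter> {..<m}))"
          by (simp add: sum.If_cases lessThan_def)
        also have "\<dots> \<le> real m"
          using card_mono[of "{..<m}" "{..<n} \<inter> {..<m}"] by simp
        finally show ?thesis .
      qed
      have bounded: "real n * ?p / 2 \<le> C + real m" for n
        using visits[of n] C[of n] by (simp add: algebra_simps)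
      obtain n where "(C + real m) * 2 / ?p < real n"
        using reals_Archimedean2 by blast
      then have "C + real m < real n * ?p / 2"
        using pos by (simp add: pos_divide_less_eq)
      then show False
        using bounded[of n] by simp
    qed
  qed
qed

end

lemma psi_comp_append: "psi_comp beta rho (xs @ ys) = psi_comp beta rho xs \<circ> psi_comp beta rho ys"
  by (induction xs) auto

lemma psi_comp_affine:
  "psi_comp beta rho w y = psi_comp beta rho w 0 + prod_list (map rho w) * y"
  by (induction w) (auto simp: algebra_simps)

lemma psi_comp_inj:
  assumes "\<And>j. j \<in> set w \<Longrightarrow> rho j \<noteq> 0" and "psi_comp beta rho w y = psi_comp beta rho w z"
  shows "y = z"
  using assms psi_comp_affine[of beta rho w y] psi_comp_affine[of beta rho w z]
  by (auto simp: prod_list_zero_iff)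

lemma psi_comp_eq_self_iff:
  assumes "prod_list (map rho w) \<noteq> 1"
  shows "psi_comp beta rho w y = y \<longleftrightarrow> fixp (psi_comp beta rho w) = y"
proof -
  let ?c = "psi_comp beta rho w 0 / (1 - prod_list (map rho w))"
  have fixed: "psi_comp beta rho w y = y \<longleftrightarrow> y = ?c" for y
    using assms psi_comp_affine[of beta rho w y] by (auto simp: field_simps)
  then have "fixp (psi_comp beta rho w) = ?c"
    unfolding fixp_def using fixed by (intro the_equality) auto
  then show ?thesis
    using fixed by auto
qed

lemma psi_comp_fixp:
  "prod_list (map rho w) \<noteq> 1 \<Longrightarrow> psi_comp beta rho w (fixp (psi_comp beta rho w)) = fixp (psi_comp beta rho w)"
  using psi_comp_eq_self_iff by blast

lemma fixp_psi_comp_rotate: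
  assumes "prod_list (map rho (xs @ ys)) \<noteq> 1"
  shows "fixp (psi_comp beta rho (ys @ xs)) = psi_comp beta rho ys (fixp (psi_comp beta rho (xs @ ys)))"
proof -
  let ?c = "fixp (psi_comp beta rho (xs @ ys))"
  have "prod_list (map rho (ys @ xs)) \<noteq> 1"
    using assms by (simp add: mult.commute)
  moreover have "psi_comp beta rho (ys @ xs) (psi_comp beta rho ys ?c) = psi_comp beta rho ys ?c"
    using psi_comp_fixp[OF assms, of beta] by (simp add: psi_comp_append)
  ultimately show ?thesis
    by (simp add: psi_comp_eq_self_iff)
qed

lemma prod_list_map_less_1:
  assumes "\<And>j. j \<in> set w \<Longrightarrow> 0 \<le> rho j \<and> rho j < (1::real)" and "w \<noteq> []"
  shows "prod_list (map rho w) < 1"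
proof -
  have "0 \<le> prod_list (map rho w) \<and> prod_list (map rho w) \<le> 1 \<and> (w \<noteq> [] \<longrightarrow> prod_list (map rho w) < 1)"
    using assms(1)
  proof (induction w)
    case (Cons j w)
    have "0 \<le> rho j" "rho j < 1" "0 \<le> prod_list (map rho w)" "prod_list (map rho w) \<le> 1"
      using Cons by auto
    moreover from this have "rho j * prod_list (map rho w) \<le> rho j"
      by (simp add: mult_left_le)
    ultimately show ?case
      by simp
  qed simp
  then show ?thesis
    using assms(2) by blast
qed

locale affine_coding = ergodic_mpt M T for M :: "'a measure" and T +
  fixes S :: "'s set" and beta rho :: "'s \<Rightarrow> real" and eps :: "'a \<Rightarrow> 's"
  assumes countable_S: "countable S"
    and rho_bounds: "\<And>j. j \<in> S \<Longrightarrow> 0 < rho j \<and> rho j < 1"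
    and eps_measurable: "eps \<in> M \<rightarrow>\<^sub>M count_space S"
    and integrable_beta: "integrable M (\<lambda>\<omega>. beta (eps \<omega>))"
    and integrable_ln_rho: "integrable M (\<lambda>\<omega>. ln (rho (eps \<omega>)))"
begin

lemma eps_in_S: "\<omega> \<in> space M \<Longrightarrow> eps \<omega> \<in> S"
  using measurable_space[OF eps_measurable] by simp

declare eps_measurable[measurable]

lemma borel_measurable_eps[measurable]: "(\<lambda>\<omega>. g (eps \<omega>) :: real) \<in> borel_measurable M"
  using measurable_comp[OF eps_measurable, of g borel] by (simp add: comp_def)

lemma borel_measurable_eps_funpow[measurable]:
  "(\<lambda>\<omega>. g (eps ((T ^^ k) \<omega>)) :: real) \<in> borel_measurable M"
  using measurable_compose[OF funpow_measurable borel_measurable_eps] .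

lemma rho_eps_pos: "\<omega> \<in> space M \<Longrightarrow> 0 < rho (eps \<omega>)"
  using rho_bounds eps_in_S by blast

lemma prod_list_rho_neq_1: "set w \<subseteq> S \<Longrightarrow> w \<noteq> [] \<Longrightarrow> prod_list (map rho w) \<noteq> 1"
  using prod_list_map_less_1[of w rho] rho_bounds by fastforce

definition rprod :: "nat \<Rightarrow> 'a \<Rightarrow> real" where
  "rprod n \<omega> = (\<Prod>k<n. rho (eps ((T ^^ k) \<omega>)))"

definition X_term :: "nat \<Rightarrow> 'a \<Rightarrow> real" where
  "X_term n \<omega> = rprod n \<omega> * beta (eps ((T ^^ n) \<omega>))"

definition X :: "'a \<Rightarrow> real" where
  "X \<omega> = (\<Sum>n. X_term n \<omega>)"

lemma X_measurable[measurable]: "X \<in> borel_measurable M"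
  unfolding X_def[abs_def] X_term_def[abs_def] rprod_def by measurable

lemma rprod_eq_exp_birkhoff_sum:
  "\<omega> \<in> space M \<Longrightarrow> rprod n \<omega> = exp (birkhoff_sum (\<lambda>\<omega>. ln (rho (eps \<omega>))) n \<omega>)"
  unfolding rprod_def birkhoff_sum_def
  by (auto simp: exp_sum rho_eps_pos funpow_in_space intro!: prod.cong)

lemma AE_rprod_exponential_decay:
  obtains q where "0 < q" "q < 1" "AE \<omega> in M. \<exists>C. \<forall>n. rprod n \<omega> \<le> C * q ^ n"
proof -
  let ?f = "\<lambda>\<omega>. ln (rho (eps \<omega>))"
  define \<mu> where "\<mu> = integral\<^sup>L M ?f"
  have "\<mu> < integral\<^sup>L M (\<lambda>_. 0)"
    unfolding \<mu>_def using integrable_ln_rho rho_bounds eps_in_S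
    by (intro integral_less_AE_space) (auto simp: emeasure_space_1)
  then have \<mu>: "\<mu> < 0"
    by simp
  have "AE \<omega> in M. \<exists>C. \<forall>n. birkhoff_sum ?f n \<omega> \<le> C + real n * (\<mu> / 2)"
    using \<mu> unfolding \<mu>_def by (intro AE_birkhoff_sum_le_linear integrable_ln_rho) simp
  then have "AE \<omega> in M. \<exists>C. \<forall>n. rprod n \<omega> \<le> C * exp (\<mu> / 2) ^ n"
  proof (rule AE_mp, intro AE_I2 impI)
    fix \<omega> assume \<omega>: "\<omega> \<in> space M" and "\<exists>C. \<forall>n. birkhoff_sum ?f n \<omega> \<le> C + real n * (\<mu> / 2)"
    then obtain C where "\<And>n. birkhoff_sum ?f n \<omega> \<le> C + real n * (\<mu> / 2)"
      by blast
    then have "rprod n \<omega> \<le> exp C * exp (\<mu> / 2) ^ n" for n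
      by (simp add: rprod_eq_exp_birkhoff_sum[OF \<omega>] exp_add[symmetric] exp_of_nat_mult[symmetric])
    then show "\<exists>C. \<forall>n. rprod n \<omega> \<le> C * exp (\<mu> / 2) ^ n"
      by blast
  qed
  then show thesis
    using \<mu> by (intro that[of "exp (\<mu> / 2)"]) auto
qed

lemma AE_beta_linear_growth:
  obtains K where "AE \<omega> in M. \<exists>C. \<forall>n. \<bar>beta (eps ((T ^^ n) \<omega>))\<bar> \<le> C + K * real (Suc n)"
proof -
  let ?f = "\<lambda>\<omega>. \<bar>beta (eps \<omega>)\<bar>"
  define K where "K = integral\<^sup>L M ?f + 1"
  have "AE \<omega> in M. \<exists>C. \<forall>n. birkhoff_sum ?f n \<omega> \<le> C + real n * K"
    unfolding K_def using integrable_beta by (intro AE_birkhoff_sum_le_linear) auto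
  then have "AE \<omega> in M. \<exists>C. \<forall>n. \<bar>beta (eps ((T ^^ n) \<omega>))\<bar> \<le> C + K * real (Suc n)"
  proof (rule AE_mp, intro AE_I2 impI)
    fix \<omega> assume "\<exists>C. \<forall>n. birkhoff_sum ?f n \<omega> \<le> C + real n * K"
    then obtain C where C: "\<And>n. birkhoff_sum ?f n \<omega> \<le> C + real n * K"
      by blast
    have "\<bar>beta (eps ((T ^^ n) \<omega>))\<bar> \<le> birkhoff_sum ?f (Suc n) \<omega>" for n
      unfolding birkhoff_sum_def by (rule member_le_sum) auto
    then show "\<exists>C. \<forall>n. \<bar>beta (eps ((T ^^ n) \<omega>))\<bar> \<le> C + K * real (Suc n)"
      using C by (metis mult.commute order_trans)
  qed
  then show thesis
    by (rule that)
qed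

lemma rprod_nonneg: "\<omega> \<in> space M \<Longrightarrow> 0 \<le> rprod n \<omega>"
  by (simp add: rprod_eq_exp_birkhoff_sum)

lemma AE_summable_X_term: "AE \<omega> in M. summable (\<lambda>n. X_term n \<omega>)"
proof -
  obtain q where q: "0 < q" "q < 1" and decay: "AE \<omega> in M. \<exists>C. \<forall>n. rprod n \<omega> \<le> C * q ^ n"
    using AE_rprod_exponential_decay by blast
  obtain K where growth: "AE \<omega> in M. \<exists>C. \<forall>n. \<bar>beta (eps ((T ^^ n) \<omega>))\<bar> \<le> C + K * real (Suc n)"
    using AE_beta_linear_growth by blast
  show ?thesis
    using decay growth AE_space
  proof eventually_elim
    case (elim \<omega>)
    obtain C1 where C1: "\<And>n. rprod n \<omega> \<le> C1 * q ^ n"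
      using elim(1) by blast
    obtain C2 where C2: "\<And>n. \<bar>beta (eps ((T ^^ n) \<omega>))\<bar> \<le> C2 + K * real (Suc n)"
      using elim(2) by blast
    let ?g = "\<lambda>n. C1 * C2 * q ^ n + C1 * K * (real (Suc n) * q ^ n)"
    have bound: "norm (X_term n \<omega>) \<le> ?g n" for n
    proof -
      have "norm (X_term n \<omega>) = rprod n \<omega> * \<bar>beta (eps ((T ^^ n) \<omega>))\<bar>"
        unfolding X_term_def using rprod_nonneg[OF elim(3)] by (simp add: abs_mult)
      also have "\<dots> \<le> (C1 * q ^ n) * (C2 + K * real (Suc n))"
        using C1[of n] C2[of n] rprod_nonneg[OF elim(3), of n] by (intro mult_mono) auto
      finally show ?thesis
        by (simp add: algebra_simps)
    qed
    have "summable ?g"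
      using q geometric_deriv_sums[of q]
      by (intro summable_add summable_mult summable_geometric) (auto intro: sums_summable)
    then show ?case
      by (rule summable_comparison_test') (rule bound)
  qed
qed

lemma X_term_0: "X_term 0 \<omega> = beta (eps \<omega>)"
  by (simp add: X_term_def rprod_def)

lemma X_term_Suc: "X_term (Suc n) \<omega> = rho (eps \<omega>) * X_term n (T \<omega>)"
  unfolding X_term_def rprod_def
  by (subst prod.lessThan_Suc_shift) (simp add: funpow_Suc_right del: funpow.simps)

lemma X_step:
  assumes "summable (\<lambda>n. X_term n \<omega>)" "summable (\<lambda>n. X_term n (T \<omega>))"
  shows "X \<omega> = beta (eps \<omega>) + rho (eps \<omega>) * X (T \<omega>)"
proof -
  have "X \<omega> = (\<Sum>n. X_term (Suc n) \<omega>) + X_term 0 \<omega>"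
    unfolding X_def using suminf_split_head[OF assms(1)] by simp
  also have "(\<Sum>n. X_term (Suc n) \<omega>) = rho (eps \<omega>) * X (T \<omega>)"
    unfolding X_term_Suc X_def using suminf_mult[OF assms(2)] .
  finally show ?thesis
    by (simp add: X_term_0)
qed

lemma X_eq_if_same_code:
  "(\<And>n. eps ((T ^^ n) \<omega>) = eps ((T ^^ n) \<omega>')) \<Longrightarrow> X \<omega> = X \<omega>'"
  by (simp add: X_def X_term_def rprod_def)

definition code_word :: "nat \<Rightarrow> 'a \<Rightarrow> 's list" where
  "code_word n \<omega> = map (\<lambda>k. eps ((T ^^ k) \<omega>)) [0..<n]"

lemma length_code_word[simp]: "length (code_word n \<omega>) = n"
  by (simp add: code_word_def)

lemma nth_code_word: "k < n \<Longrightarrow> code_word n \<omega> ! k = eps ((T ^^ k) \<omega>)"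
  by (simp add: code_word_def)

lemma code_word_Suc: "code_word (Suc n) \<omega> = eps \<omega> # code_word n (T \<omega>)"
  by (rule nth_equalityI)
    (auto simp: nth_code_word nth_Cons funpow_Suc_right split: nat.splits simp del: funpow.simps)

lemma take_code_word: "m \<le> n \<Longrightarrow> take m (code_word n \<omega>) = code_word m \<omega>"
  by (rule nth_equalityI) (auto simp: nth_code_word)

lemma set_code_word: "\<omega> \<in> space M \<Longrightarrow> set (code_word n \<omega>) \<subseteq> S"
  by (auto simp: code_word_def intro: eps_in_S funpow_in_space)

definition cylinder :: "'s list \<Rightarrow> 'a set" where
  "cylinder w = {\<omega> \<in> space M. \<forall>k < length w. eps ((T ^^ k) \<omega>) = w ! k}"

lemma cylinder_sets[measurable]: "cylinder w \<in> sets M"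
  unfolding cylinder_def by measurable

lemma in_cylinder_code_word: "\<omega> \<in> space M \<Longrightarrow> \<omega> \<in> cylinder (code_word n \<omega>)"
  by (simp add: cylinder_def nth_code_word)

lemma AE_cylinder_code_word_pos: "AE \<omega> in M. \<forall>n. 0 < measure M (cylinder (code_word n \<omega>))"
proof -
  have "AE \<omega> in M. \<forall>w\<in>{w \<in> lists S. measure M (cylinder w) = 0}. \<omega> \<notin> cylinder w"
    using countable_S
    by (subst AE_ball_countable) (auto intro!: AE_I'[of "cylinder _"] simp: emeasure_eq_measure)
  then show ?thesis
    using AE_space
  proof eventually_elim
    case (elim \<omega>)
    then have "measure M (cylinder (code_word n \<omega>)) \<noteq> 0" for n
      using in_cylinder_code_word set_code_word by blast
    then show ?case
      using measure_nonneg[of M] by (simp add: order_less_le)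
  qed
qed

(* Quantifying over all shifts makes the set of typical points forward invariant. *)
definition typical :: "'a \<Rightarrow> bool" where
  "typical \<omega> \<longleftrightarrow> (\<forall>m. (T ^^ m) \<omega> \<in> space M \<and> summable (\<lambda>n. X_term n ((T ^^ m) \<omega>)) \<and>
     (\<forall>n. 0 < measure M (cylinder (code_word n ((T ^^ m) \<omega>)))))"

lemma AE_typical: "AE \<omega> in M. typical \<omega>"
proof -
  have "AE \<omega> in M. \<omega> \<in> space M \<and> summable (\<lambda>n. X_term n \<omega>) \<and>
      (\<forall>n. 0 < measure M (cylinder (code_word n \<omega>)))"
    using AE_space AE_summable_X_term AE_cylinder_code_word_pos by eventually_elim blast
  then show ?thesis
    unfolding typical_def by (rule AE_all_funpow)
qed

lemma typical_funpow: "typical \<omega> \<Longrightarrow> typical ((T ^^ n) \<omega>)"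
  by (simp add: typical_def funpow_apply_add)

lemma
  assumes "typical \<omega>"
  shows typical_in_space: "\<omega> \<in> space M"
    and typical_summable: "summable (\<lambda>n. X_term n \<omega>)"
    and typical_cylinder_pos: "0 < measure M (cylinder (code_word n \<omega>))"
  using assms unfolding typical_def by (auto dest: spec[where x=0])

lemma X_funpow:
  "typical \<omega> \<Longrightarrow> X \<omega> = psi_comp beta rho (code_word n \<omega>) (X ((T ^^ n) \<omega>))"
proof (induction n arbitrary: \<omega>)
  case (Suc n)
  have "X \<omega> = beta (eps \<omega>) + rho (eps \<omega>) * X (T \<omega>)"
    using typical_summable Suc.prems typical_funpow[OF Suc.prems, of 1] by (intro X_step) simp_all
  also have "X (T \<omega>) = psi_comp beta rho (code_word n (T \<omega>)) (X ((T ^^ n) (T \<omega>)))"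
    using Suc.IH typical_funpow[OF Suc.prems, of 1] by simp
  finally show ?case
    by (simp add: code_word_Suc funpow_Suc_right del: funpow.simps)
qed (simp add: code_word_def)

lemma fixp_code_word_iff:
  assumes "typical \<omega>" "1 \<le> n"
  shows "fixp (psi_comp beta rho (code_word n \<omega>)) = y \<longleftrightarrow> psi_comp beta rho (code_word n \<omega>) y = y"
  using assms
  by (intro psi_comp_eq_self_iff[symmetric] prod_list_rho_neq_1 set_code_word typical_in_space)
    (auto simp: code_word_def)

lemma minimal_code_word_of_return:
  assumes \<omega>: "typical \<omega>" and "X \<omega> = x" "X ((T ^^ n) \<omega>) = x" "1 \<le> n"
  obtains m where "1 \<le> m" "m \<le> n" "minimal_idx M T eps S beta rho (code_word m \<omega>)"
    "fixp (psi_comp beta rho (code_word m \<omega>)) = x"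
proof -
  define P where "P m \<longleftrightarrow> 1 \<le> m \<and> fixp (psi_comp beta rho (code_word m \<omega>)) = x" for m
  have "P n"
    using assms X_funpow[OF \<omega>, of n] fixp_code_word_iff[OF \<omega>] by (simp add: P_def)
  define m where "m = (LEAST m. P m)"
  have "P m" "m \<le> n"
    unfolding m_def using \<open>P n\<close> by (auto intro: LeastI Least_le)
  moreover have "minimal_idx M T eps S beta rho (code_word m \<omega>)"
    unfolding minimal_idx_def
  proof (intro conjI allI impI)
    show "0 < measure M {\<omega>' \<in> space M. \<forall>k<length (code_word m \<omega>). eps ((T ^^ k) \<omega>') = code_word m \<omega> ! k}"
      using typical_cylinder_pos[OF \<omega>] unfolding cylinder_def .
    fix l assume "1 \<le> l \<and> l < length (code_word m \<omega>)"
    then show "fixp (psi_comp beta rho (take l (code_word m \<omega>))) \<noteq> fixp (psi_comp beta rho (code_word m \<omega>))"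
      using not_less_Least[of l P] \<open>P m\<close> by (simp add: P_def m_def take_code_word)
  qed (use \<open>P m\<close> set_code_word typical_in_space[OF \<omega>] in \<open>auto simp: P_def\<close>)
  ultimately show thesis
    using that by (auto simp: P_def)
qed

lemma return_word:
  assumes inj: "inj_on (\<lambda>i. fixp (psi_comp beta rho i)) {i. minimal_idx M T eps S beta rho i}"
    and u: "minimal_idx M T eps S beta rho u" "fixp (psi_comp beta rho u) = x"
    and \<omega>: "typical \<omega>" "X \<omega> = x" "X ((T ^^ n) \<omega>) = x" "1 \<le> n"
  shows "length u \<le> n" "code_word (length u) \<omega> = u" "X ((T ^^ length u) \<omega>) = x"
proof -
  obtain m where m: "m \<le> n" "minimal_idx M T eps S beta rho (code_word m \<omega>)"
    "fixp (psi_comp beta rho (code_word m \<omega>)) = x"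
    using minimal_code_word_of_return[OF \<omega>] by metis
  have word: "code_word m \<omega> = u"
    using inj_onD[OF inj, of "code_word m \<omega>" u] m(2,3) u by simp
  then show "length u \<le> n" "code_word (length u) \<omega> = u"
    using m(1) length_code_word[of m \<omega>] by auto
  have "set u \<subseteq> S" "u \<noteq> []"
    using u(1) unfolding minimal_idx_def by auto
  then have "psi_comp beta rho u (X ((T ^^ m) \<omega>)) = psi_comp beta rho u x"
    using X_funpow[OF \<omega>(1), of m] \<omega>(2) word psi_comp_fixp[OF prod_list_rho_neq_1] u(2) by metis
  moreover have "rho j \<noteq> 0" if "j \<in> set u" for j
    using that \<open>set u \<subseteq> S\<close> rho_bounds by fastforce
  ultimately show "X ((T ^^ length u) \<omega>) = x"
    using psi_comp_inj word length_code_word[of m \<omega>] by metis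
qed

lemma code_periodic_before_return:
  assumes inj: "inj_on (\<lambda>i. fixp (psi_comp beta rho i)) {i. minimal_idx M T eps S beta rho i}"
    and u: "minimal_idx M T eps S beta rho u" "fixp (psi_comp beta rho u) = x"
  shows "typical \<omega> \<Longrightarrow> X \<omega> = x \<Longrightarrow> X ((T ^^ n) \<omega>) = x \<Longrightarrow> k < n \<Longrightarrow>
    eps ((T ^^ k) \<omega>) = u ! (k mod length u)"
proof (induction n arbitrary: \<omega> k rule: less_induct)
  case (less n \<omega> k)
  then have "1 \<le> n"
    by simp
  note return = return_word[OF inj u less.prems(1-3) this]
  show ?case
  proof (cases "k < length u")
    case True
    then show ?thesis
      using return(2) nth_code_word[of k "length u" \<omega>] by simp
  next
    case False
    have "1 \<le> length u"
      using u(1) unfolding minimal_idx_def by simp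
    moreover have "X ((T ^^ (n - length u)) ((T ^^ length u) \<omega>)) = x"
      using less.prems(3) return(1) by (simp add: funpow_apply_add)
    ultimately have "eps ((T ^^ (k - length u)) ((T ^^ length u) \<omega>)) = u ! ((k - length u) mod length u)"
      using less.IH[of "n - length u"] typical_funpow[OF less.prems(1)] return(3) less.prems(4) False
      by simp
    then show ?thesis
      using False by (simp add: funpow_apply_add le_mod_geq)
  qed
qed

definition returns_to :: "real \<Rightarrow> 'a \<Rightarrow> bool" where
  "returns_to x \<omega> \<longleftrightarrow> typical \<omega> \<and> X \<omega> = x \<and> (\<forall>m. \<exists>n\<ge>m. X ((T ^^ n) \<omega>) = x)"

lemma AE_eventually_returns_to:
  assumes "0 < measure M {\<omega> \<in> space M. X \<omega> = x}"
  shows "AE \<omega> in M. \<exists>m. returns_to x ((T ^^ m) \<omega>)"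
proof -
  have "AE \<omega> in M. typical \<omega> \<and> (\<forall>m. \<exists>n\<ge>m. (T ^^ n) \<omega> \<in> {\<omega> \<in> space M. X \<omega> = x})"
    using AE_typical AE_infinitely_often_in[OF _ assms] by (auto elim: AE_mp)
  then show ?thesis
  proof eventually_elim
    case (elim \<omega>)
    then obtain m where "X ((T ^^ m) \<omega>) = x"
      by blast
    moreover have "\<exists>n'\<ge>n. X ((T ^^ n') ((T ^^ m) \<omega>)) = x" for n
    proof -
      obtain n' where "n + m \<le> n'" "X ((T ^^ n') \<omega>) = x"
        using elim by blast
      then show ?thesis
        by (intro exI[of _ "n' - m"]) (auto simp: funpow_apply_add)
    qed
    ultimately show ?case
      using typical_funpow elim unfolding returns_to_def by blast
  qed
qed

lemma code_periodic_if_returns_to: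
  assumes inj: "inj_on (\<lambda>i. fixp (psi_comp beta rho i)) {i. minimal_idx M T eps S beta rho i}"
    and u: "minimal_idx M T eps S beta rho u" "fixp (psi_comp beta rho u) = x"
    and "returns_to x \<omega>"
  shows "eps ((T ^^ k) \<omega>) = u ! (k mod length u)"
proof -
  obtain n where "Suc k \<le> n" "X ((T ^^ n) \<omega>) = x"
    using \<open>returns_to x \<omega>\<close> unfolding returns_to_def by blast
  then show ?thesis
    using code_periodic_before_return[OF inj u] \<open>returns_to x \<omega>\<close> unfolding returns_to_def by simp
qed

lemma periodic_coding_if_AE_eventually_periodic:
  assumes "1 \<le> length u" "set u \<subseteq> S"
    and eventually: "AE \<omega> in M. \<exists>m. \<forall>k. eps ((T ^^ k) ((T ^^ m) \<omega>)) = u ! (k mod length u)"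
  shows "periodic_coding M T eps S (length u) u"
proof -
  define A where "A = {\<omega> \<in> space M. \<exists>j. \<forall>k. eps ((T ^^ k) \<omega>) = u ! ((k + j) mod length u)}"
  have "AE \<omega> in M. \<omega> \<in> A"
  proof (rule AE_in_if_AE_eventually_in)
    show "A \<in> sets M"
      unfolding A_def by measurable
    show "T \<omega> \<in> A" if "\<omega> \<in> A" for \<omega>
    proof -
      obtain j where j: "\<And>k. eps ((T ^^ k) \<omega>) = u ! ((k + j) mod length u)"
        using \<open>\<omega> \<in> A\<close> unfolding A_def by blast
      have "eps ((T ^^ k) (T \<omega>)) = u ! ((k + Suc j) mod length u)" for k
        using j[of "Suc k"] by (simp add: funpow_Suc_right del: funpow.simps)
      then show ?thesis
        using \<open>\<omega> \<in> A\<close> measurable_space[OF T_measurable] unfolding A_def by blast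
    qed
    show "AE \<omega> in M. \<exists>m. (T ^^ m) \<omega> \<in> A"
      using eventually AE_space
    proof eventually_elim
      case (elim \<omega>)
      then obtain m where "\<forall>k. eps ((T ^^ k) ((T ^^ m) \<omega>)) = u ! ((k + 0) mod length u)"
        by auto
      then show ?case
        using funpow_in_space[OF elim(2)] unfolding A_def by blast
    qed
  qed
  then show ?thesis
    using assms(1,2) unfolding periodic_coding_def A_def by (auto elim!: AE_mp intro!: AE_I2)
qed

theorem periodic_coding_if_atom:
  assumes inj: "inj_on (\<lambda>i. fixp (psi_comp beta rho i)) {i. minimal_idx M T eps S beta rho i}"
    and atom: "0 < measure M {\<omega> \<in> space M. X \<omega> = x}"
  shows "\<exists>N u. periodic_coding M T eps S N u"
proof -
  note AE_returns = AE_eventually_returns_to[OF atom]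
  then obtain \<omega>0 where "returns_to x \<omega>0"
    using AE_False eventually_happens'[OF ae_filter_bot] by blast
  then obtain n where "1 \<le> n" "X ((T ^^ n) \<omega>0) = x"
    unfolding returns_to_def by (metis less_eq_Suc_le)
  then obtain m where u: "minimal_idx M T eps S beta rho (code_word m \<omega>0)"
    "fixp (psi_comp beta rho (code_word m \<omega>0)) = x"
    using minimal_code_word_of_return \<open>returns_to x \<omega>0\<close> unfolding returns_to_def by metis
  have "1 \<le> length (code_word m \<omega>0)" "set (code_word m \<omega>0) \<subseteq> S"
    using u(1) unfolding minimal_idx_def by auto
  moreover have "AE \<omega> in M. \<exists>m'. \<forall>k. eps ((T ^^ k) ((T ^^ m') \<omega>)) = code_word m \<omega>0 ! (k mod m)"
    using AE_returns by eventually_elim (use code_periodic_if_returns_to[OF inj u] in auto)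
  ultimately show ?thesis
    using periodic_coding_if_AE_eventually_periodic by fastforce
qed

lemma code_word_rotate:
  assumes "\<And>n. eps ((T ^^ n) \<omega>) = u ! ((n + k) mod length u)"
  shows "code_word (length u) \<omega> = rotate k u"
  by (rule nth_equalityI) (simp_all add: nth_code_word nth_rotate assms add.commute)

lemma X_periodic_code:
  assumes \<omega>: "typical \<omega>" and u: "set u \<subseteq> S" "u \<noteq> []"
    and code: "\<And>n. eps ((T ^^ n) \<omega>) = u ! ((n + k) mod length u)"
  shows "X \<omega> = psi_comp beta rho (drop (k mod length u) u) (fixp (psi_comp beta rho u))"
proof -
  let ?d = "drop (k mod length u) u" and ?t = "take (k mod length u) u"
  have "(n + length u + k) mod length u = (n + k) mod length u" for n
    by (metis add.commute add.left_commute mod_add_self2)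
  then have "X ((T ^^ length u) \<omega>) = X \<omega>"
    by (intro X_eq_if_same_code) (simp add: code funpow_apply_add)
  then have "psi_comp beta rho (?d @ ?t) (X \<omega>) = X \<omega>"
    using X_funpow[OF \<omega>, of "length u"] code_word_rotate[OF code] by (simp add: rotate_drop_take)
  moreover have "prod_list (map rho (?d @ ?t)) = prod_list (map rho (?t @ ?d))"
    by (simp only: map_append prod_list.append mult.commute)
  then have "prod_list (map rho (?d @ ?t)) \<noteq> 1" "prod_list (map rho (?t @ ?d)) \<noteq> 1"
    using prod_list_rho_neq_1[OF u] by simp_all
  ultimately have "X \<omega> = fixp (psi_comp beta rho (?d @ ?t))"
    using psi_comp_eq_self_iff by metis
  also have "\<dots> = psi_comp beta rho ?d (fixp (psi_comp beta rho (?t @ ?d)))"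
    using fixp_psi_comp_rotate \<open>prod_list (map rho (?t @ ?d)) \<noteq> 1\<close> by blast
  finally show ?thesis
    by simp
qed

theorem image_X_if_periodic_coding:
  assumes "periodic_coding M T eps S N u"
  shows "\<exists>Z \<in> null_sets M.
    X ` (space M - Z) = {psi_comp beta rho (drop k u) (fixp (psi_comp beta rho u)) | k. k < N}"
proof -
  have N: "1 \<le> N" "length u = N" "set u \<subseteq> S" "u \<noteq> []"
    and AE_code: "AE \<omega> in M. \<exists>k. \<forall>n. eps ((T ^^ n) \<omega>) = u ! ((n + k) mod N)"
    using assms unfolding periodic_coding_def by auto
  let ?value = "\<lambda>k. psi_comp beta rho (drop k u) (fixp (psi_comp beta rho u))"
  have X_value: "X \<omega> = ?value (k mod N)"
    if "typical \<omega>" "\<And>n. eps ((T ^^ n) \<omega>) = u ! ((n + k) mod N)" for \<omega> k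
    using X_periodic_code[OF that(1) N(3,4)] that(2) N(2) by simp
  obtain Z where Z: "Z \<in> null_sets M" and outside_Z: "\<And>\<omega>. \<omega> \<in> space M - Z \<Longrightarrow>
      (typical \<omega> \<and> (\<exists>k. \<forall>n. eps ((T ^^ n) \<omega>) = u ! ((n + k) mod N))) \<and> T \<omega> \<in> space M - Z"
    using AE_invariant_null_set[OF eventually_conj[OF AE_typical AE_code]] by blast
  have "X ` (space M - Z) = {?value k | k. k < N}"
  proof (intro equalityI subsetI)
    fix y assume "y \<in> X ` (space M - Z)"
    then show "y \<in> {?value k | k. k < N}"
      using outside_Z X_value N(1) by (force intro!: mod_less_divisor)
  next
    fix y assume "y \<in> {?value k | k. k < N}"
    then obtain k where k: "k < N" "y = ?value k"
      by blast
    have "space M - Z \<noteq> {}"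
      using Z emeasure_space_1 emeasure_mono[of "space M" Z M] by (auto simp: null_sets_def)
    then obtain \<omega>0 k0 where \<omega>0: "\<omega>0 \<in> space M - Z" "\<And>n. eps ((T ^^ n) \<omega>0) = u ! ((n + k0) mod N)"
      using outside_Z by blast
    define m where "m = k + (N - 1) * k0"
    have "m + k0 = k + N * k0"
      using N(1) by (cases N) (simp_all add: m_def)
    have "(T ^^ m) \<omega>0 \<in> space M - Z"
      using \<omega>0(1) outside_Z by (induction m) auto
    moreover have "eps ((T ^^ n) ((T ^^ m) \<omega>0)) = u ! ((n + (m + k0)) mod N)" for n
      using \<omega>0(2)[of "n + m"] by (simp add: funpow_apply_add add.assoc)
    moreover have "(m + k0) mod N = k"
      using \<open>m + k0 = k + N * k0\<close> k(1) by simp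
    ultimately have "X ((T ^^ m) \<omega>0) = y"
      using outside_Z X_value k(2) by metis
    then show "y \<in> X ` (space M - Z)"
      using \<open>(T ^^ m) \<omega>0 \<in> space M - Z\<close> by blast
  qed
  then show ?thesis
    using Z by blast
qed

end

theorem mainTheorem4:
  fixes M :: "'a measure" and T :: "'a \<Rightarrow> 'a" and S :: "'s set"
    and beta rho :: "'s \<Rightarrow> real" and eps :: "'a \<Rightarrow> 's"
    and b r :: "'a \<Rightarrow> real" and rn :: "nat \<Rightarrow> 'a \<Rightarrow> real" and X :: "'a \<Rightarrow> real"
  assumes "prob_space M"
    and "invertible_mpt M T"
    and "ergodic M T"
    and "countable S"
    and "\<And>j. j \<in> S \<Longrightarrow> 0 < rho j \<and> rho j < 1"
    and "eps \<in> measurable M (count_space S)"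
    and "\<And>j. j \<in> S \<Longrightarrow> measure M {\<omega> \<in> space M. eps \<omega> = j} > 0"
    and "b = (\<lambda>\<omega>. beta (eps \<omega>))"
    and "r = (\<lambda>\<omega>. rho (eps \<omega>))"
    and "integrable M b"
    and "integrable M (\<lambda>\<omega>. ln (r \<omega>))"
    and "rn = (\<lambda>n \<omega>. \<Prod>k<n. r ((T ^^ k) \<omega>))"
    and "X = (\<lambda>\<omega>. \<Sum>n. rn n \<omega> * b ((T ^^ n) \<omega>))"
    and "inj_on (\<lambda>i. fixp (psi_comp beta rho i)) {i. minimal_idx M T eps S beta rho i}"
  shows "((\<forall>x. measure (distr M lborel X) {x} = 0)
           \<or> (\<exists>N is. periodic_coding M T eps S N is))
         \<and> (\<forall>N is. periodic_coding M T eps S N is \<longrightarrow>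
              (\<exists>Z \<in> null_sets M.
                 X ` (space M - Z) =
                   {psi_comp beta rho (drop k is) (fixp (psi_comp beta rho is)) | k. k < N}))"
proof -
  have "T \<in> M \<rightarrow>\<^sub>M M" "distr M M T = M"
    using assms(2) unfolding invertible_mpt_def by auto
  moreover have "integrable M (\<lambda>\<omega>. beta (eps \<omega>))" "integrable M (\<lambda>\<omega>. ln (rho (eps \<omega>)))"
    using assms(8-11) by simp_all
  ultimately interpret C: affine_coding M T S beta rho eps
    using assms(1,3-6)
    by (intro affine_coding.intro ergodic_mpt.intro mpt.intro
        mpt_axioms.intro ergodic_mpt_axioms.intro affine_coding_axioms.intro)
  have X_eq: "X = C.X"
    using assms(8,9,12,13) by (simp add: fun_eq_iff C.X_def C.X_term_def C.rprod_def)
  have "\<exists>N is. periodic_coding M T eps S N is" if "measure (distr M lborel X) {x} \<noteq> 0" for x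
  proof -
    have "measure (distr M lborel X) {x} = measure M {\<omega> \<in> space M. C.X \<omega> = x}"
      unfolding X_eq by (subst measure_distr) (auto simp: vimage_def Int_def conj_commute)
    then have "0 < measure M {\<omega> \<in> space M. C.X \<omega> = x}"
      using that by (simp add: order_less_le)
    then show ?thesis
      by (rule C.periodic_coding_if_atom[OF assms(14)])
  qed
  then show ?thesis
    using C.image_X_if_periodic_coding X_eq by blast
qed

end
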